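(* Let $G$ be a group with finite generating set $S$ (with $S=S^{-1}$, $e\notin S$). For $n\ge 3$ let $\sigma=(1\,2\,\cdots\,n)\in\mathrm{Sym}(n)$ and $S_{\rm neg}=\{(1\,2),(2\,3),\dots,(n-1\ n),\sigma,\sigma^{-1}\}$. Then for all sufficiently large $n$ there is a map $i\colon G\to G\times\mathrm{Sym}(n)$ which is an isometric embedding for the word metrics of $(G,S)$ and $(G\times\mathrm{Sym}(n),S\boxtimes S_{\rm neg})$, such that $\kappa(i(g))<0$ for all $g\in G$ (curvature with respect to $S\boxtimes S_{\rm neg}$), and such that $d(i(gh),i(g)i(h))\le 1$ for all $g,h\in G$.
   Context: For generating sets $S_1,S_2$ of groups $G_1,G_2$, $S_1\boxtimes S_2=(S_1\times\{e\})\cup(\{e\}\times S_2)$ is the split generating set of $G_1\times G_2$. For a group with finite generating set $S$ ($S=S^{-1}$, $e\notin S$), $|x|$ is word length, $d(x,y)=|x^{-1}y|$, $\mathrm{Av}(g)=\frac{1}{|S|}\sum_{a\in S}|a^{-1}ga|$, and for $g\neq e$ the curvature is $\kappa(g)=\frac{|g|-\mathrm{Av}(g)}{|g|}$. *)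

theory Defs
  imports "HOL-Algebra.Sym_Groups" "HOL-Algebra.Generated_Groups" Complex_Main
begin

definition fin_sym_gen_set :: "('a, 'b) monoid_scheme \<Rightarrow> 'a set \<Rightarrow> bool" where
  "fin_sym_gen_set G S \<longleftrightarrow> finite S \<and> S \<subseteq> carrier G \<and> (\<forall>s\<in>S. inv\<^bsub>G\<^esub> s \<in> S)
     \<and> \<one>\<^bsub>G\<^esub> \<notin> S \<and> generate G S = carrier G"

definition word_length :: "('a, 'b) monoid_scheme \<Rightarrow> 'a set \<Rightarrow> 'a \<Rightarrow> nat" where
  "word_length G S g = (LEAST k. \<exists>ws. length ws = k \<and> set ws \<subseteq> S \<and>
       foldr (\<lambda>x y. x \<otimes>\<^bsub>G\<^esub> y) ws \<one>\<^bsub>G\<^esub> = g)"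

definition word_dist :: "('a, 'b) monoid_scheme \<Rightarrow> 'a set \<Rightarrow> 'a \<Rightarrow> 'a \<Rightarrow> nat" where
  "word_dist G S x y = word_length G S (inv\<^bsub>G\<^esub> x \<otimes>\<^bsub>G\<^esub> y)"

definition word_avg :: "('a, 'b) monoid_scheme \<Rightarrow> 'a set \<Rightarrow> 'a \<Rightarrow> real" where
  "word_avg G S g = (\<Sum>a\<in>S. real (word_length G S (inv\<^bsub>G\<^esub> a \<otimes>\<^bsub>G\<^esub> g \<otimes>\<^bsub>G\<^esub> a))) / real (card S)"

text \<open>Curvature kappa(g) = (|g| - Av(g)) / |g| (meaningful for g not the identity).\<close>
definition curvature :: "('a, 'b) monoid_scheme \<Rightarrow> 'a set \<Rightarrow> 'a \<Rightarrow> real" where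
  "curvature G S g = (real (word_length G S g) - word_avg G S g) / real (word_length G S g)"

definition split_gen :: "('a, 'c) monoid_scheme \<Rightarrow> ('b, 'd) monoid_scheme \<Rightarrow> 'a set \<Rightarrow> 'b set \<Rightarrow> ('a \<times> 'b) set" where
  "split_gen G1 G2 S1 S2 = (S1 \<times> {\<one>\<^bsub>G2\<^esub>}) \<union> ({\<one>\<^bsub>G1\<^esub>} \<times> S2)"

definition ncycle :: "nat \<Rightarrow> nat \<Rightarrow> nat" where
  "ncycle n = (\<lambda>k. if 1 \<le> k \<and> k \<le> n then (if k = n then 1 else k + 1) else k)"

definition ncycle_inv :: "nat \<Rightarrow> nat \<Rightarrow> nat" where
  "ncycle_inv n = (\<lambda>k. if 1 \<le> k \<and> k \<le> n then (if k = 1 then n else k - 1) else k)"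

definition S_neg :: "nat \<Rightarrow> (nat \<Rightarrow> nat) set" where
  "S_neg n = {Transposition.transpose i (i + 1) | i. 1 \<le> i \<and> i < n} \<union> {ncycle n, ncycle_inv n}"

end

theory Submission
  imports Defs
begin

text \<open>The embedding is \<open>i g = (g, \<sigma>)\<close>. Word length for the split generating set is additive
  over the two factors, so \<open>i\<close> is an isometry, and \<open>i (g h)\<close> differs from \<open>i g i h\<close> by the
  generator \<open>(e, \<sigma>)\<close>. For the curvature, \<open>|i g| = |g| + 1\<close>: conjugating \<open>i g\<close> by a generator
  \<open>(s, e)\<close> shortens it by at most 2, conjugating by \<open>(e, t)\<close> lengthens it by at least 1 since
  \<open>t\<inverse> \<sigma> t \<noteq> e\<close>, and by at least 2 for each of the \<open>n - 1\<close> adjacent transpositions \<open>t\<close>, because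
  then \<open>t \<sigma> t\<close> is not itself a generator. Once \<open>n - 1 > 2 |S|\<close> these gains outweigh the losses,
  so \<open>Av (i g) > |i g|\<close>.\<close>

abbreviation word_prod :: "('a, 'b) monoid_scheme \<Rightarrow> 'a list \<Rightarrow> 'a" where
  "word_prod G ws \<equiv> foldr (\<lambda>x y. x \<otimes>\<^bsub>G\<^esub> y) ws \<one>\<^bsub>G\<^esub>"

definition word_representable :: "('a, 'b) monoid_scheme \<Rightarrow> 'a set \<Rightarrow> 'a \<Rightarrow> bool" where
  "word_representable G S g \<longleftrightarrow> (\<exists>ws. set ws \<subseteq> S \<and> word_prod G ws = g)"

lemma word_prod_closed: "monoid G \<Longrightarrow> set ws \<subseteq> carrier G \<Longrightarrow> word_prod G ws \<in> carrier G"
  by (induction ws) (auto simp: monoid.m_closed)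

lemma word_prod_append:
  "monoid G \<Longrightarrow> set xs \<subseteq> carrier G \<Longrightarrow> set ys \<subseteq> carrier G \<Longrightarrow>
   word_prod G (xs @ ys) = word_prod G xs \<otimes>\<^bsub>G\<^esub> word_prod G ys"
  by (induction xs) (auto simp: word_prod_closed monoid.m_assoc)

lemma word_prod_ones: "monoid G \<Longrightarrow> word_prod G (map (\<lambda>_. \<one>\<^bsub>G\<^esub>) xs) = \<one>\<^bsub>G\<^esub>"
  by (induction xs) auto

lemma word_prod_map_filter:
  assumes "monoid G" "f ` set xs \<subseteq> carrier G" "\<And>x. x \<in> set xs \<Longrightarrow> \<not> P x \<Longrightarrow> f x = \<one>\<^bsub>G\<^esub>"
  shows "word_prod G (map f (filter P xs)) = word_prod G (map f xs)"
  using assms(2,3) by (induction xs) (auto simp: assms(1) monoid.l_one word_prod_closed)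

lemma word_prod_DirProd:
  "word_prod (G \<times>\<times> H) ws = (word_prod G (map fst ws), word_prod H (map snd ws))"
  by (induction ws) auto

lemma word_representable_generator:
  "monoid G \<Longrightarrow> S \<subseteq> carrier G \<Longrightarrow> s \<in> S \<Longrightarrow> word_representable G S s"
  unfolding word_representable_def by (intro exI[of _ "[s]"]) (auto simp: monoid.r_one)

lemma word_representable_mult:
  assumes "monoid G" "S \<subseteq> carrier G" "word_representable G S x" "word_representable G S y"
  shows "word_representable G S (x \<otimes>\<^bsub>G\<^esub> y)"
proof -
  obtain xs ys where "set xs \<subseteq> S" "word_prod G xs = x" "set ys \<subseteq> S" "word_prod G ys = y"
    using assms(3,4) unfolding word_representable_def by blast
  with assms(1,2) show ?thesis unfolding word_representable_def
    by (intro exI[of _ "xs @ ys"]) (auto simp del: foldr_append simp: word_prod_append)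
qed

lemma word_representable_generate:
  assumes "group G" "S \<subseteq> carrier G" "\<And>s. s \<in> S \<Longrightarrow> inv\<^bsub>G\<^esub> s \<in> S" "g \<in> generate G S"
  shows "word_representable G S g"
  using assms(4)
proof (induction rule: generate.induct)
  case one
  show ?case unfolding word_representable_def by (intro exI[of _ "[]"]) simp
next
  case (incl h)
  then show ?case using assms(1,2) by (simp add: group.is_monoid word_representable_generator)
next
  case (inv h)
  then show ?case using assms by (simp add: group.is_monoid word_representable_generator)
next
  case (eng h1 h2)
  then show ?case using assms(1,2) by (simp add: group.is_monoid word_representable_mult)
qed

lemma word_representable_carrier:
  "group G \<Longrightarrow> fin_sym_gen_set G S \<Longrightarrow> g \<in> carrier G \<Longrightarrow> word_representable G S g"
  unfolding fin_sym_gen_set_def by (auto intro: word_representable_generate)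

lemma word_length_le: "set ws \<subseteq> S \<Longrightarrow> word_prod G ws = g \<Longrightarrow> word_length G S g \<le> length ws"
  unfolding word_length_def by (rule Least_le) blast

lemma obtain_shortest_word:
  assumes "word_representable G S g"
  obtains ws where "length ws = word_length G S g" "set ws \<subseteq> S" "word_prod G ws = g"
proof -
  have "\<exists>ws. length ws = word_length G S g \<and> set ws \<subseteq> S \<and> word_prod G ws = g"
    unfolding word_length_def
    by (rule LeastI_ex) (use assms in \<open>auto simp: word_representable_def\<close>)
  then show ?thesis using that by blast
qed

lemma word_length_one [simp]: "word_length G S \<one>\<^bsub>G\<^esub> = 0"
  using word_length_le[of "[]" S G] by simp

lemma word_length_eq_0_iff:
  assumes "word_representable G S g"
  shows "word_length G S g = 0 \<longleftrightarrow> g = \<one>\<^bsub>G\<^esub>"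
proof
  assume "word_length G S g = 0"
  moreover obtain ws where "length ws = word_length G S g" "word_prod G ws = g"
    using assms by (rule obtain_shortest_word)
  ultimately show "g = \<one>\<^bsub>G\<^esub>" by simp
qed simp

lemma word_length_generator_le: "monoid G \<Longrightarrow> S \<subseteq> carrier G \<Longrightarrow> s \<in> S \<Longrightarrow> word_length G S s \<le> 1"
  using word_length_le[of "[s]" S G s] by (auto simp: monoid.r_one)

lemma word_length_le_1_iff:
  assumes "monoid G" "S \<subseteq> carrier G" "word_representable G S g"
  shows "word_length G S g \<le> 1 \<longleftrightarrow> g = \<one>\<^bsub>G\<^esub> \<or> g \<in> S"
proof
  assume "word_length G S g \<le> 1"
  obtain ws where "length ws = word_length G S g" "set ws \<subseteq> S" "word_prod G ws = g"
    using assms(3) by (rule obtain_shortest_word)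
  with \<open>word_length G S g \<le> 1\<close> have "ws = [] \<or> (\<exists>a. ws = [a])"
    by (auto simp: le_Suc_eq length_Suc_conv)
  then show "g = \<one>\<^bsub>G\<^esub> \<or> g \<in> S"
    using assms(1,2) \<open>set ws \<subseteq> S\<close> \<open>word_prod G ws = g\<close> by (auto simp: monoid.r_one)
next
  assume "g = \<one>\<^bsub>G\<^esub> \<or> g \<in> S"
  then show "word_length G S g \<le> 1" using assms(1,2) word_length_generator_le by auto
qed

lemma word_length_mult_le:
  assumes "monoid G" "S \<subseteq> carrier G" "word_representable G S x" "word_representable G S y"
  shows "word_length G S (x \<otimes>\<^bsub>G\<^esub> y) \<le> word_length G S x + word_length G S y"
proof -
  obtain xs where "length xs = word_length G S x" "set xs \<subseteq> S" "word_prod G xs = x"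
    using assms(3) by (rule obtain_shortest_word)
  moreover obtain ys where "length ys = word_length G S y" "set ys \<subseteq> S" "word_prod G ys = y"
    using assms(4) by (rule obtain_shortest_word)
  ultimately show ?thesis
    using assms(1,2) word_length_le[of "xs @ ys" S G]
    by (auto simp del: foldr_append simp: word_prod_append)
qed

lemma word_length_conj_le:
  assumes "group G" "S \<subseteq> carrier G" "s \<in> S" "inv\<^bsub>G\<^esub> s \<in> S" "x \<in> carrier G"
    and rep: "word_representable G S (inv\<^bsub>G\<^esub> s \<otimes>\<^bsub>G\<^esub> x \<otimes>\<^bsub>G\<^esub> s)"
  shows "word_length G S x \<le> word_length G S (inv\<^bsub>G\<^esub> s \<otimes>\<^bsub>G\<^esub> x \<otimes>\<^bsub>G\<^esub> s) + 2"
proof -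
  interpret group G by fact
  let ?y = "inv\<^bsub>G\<^esub> s \<otimes>\<^bsub>G\<^esub> x \<otimes>\<^bsub>G\<^esub> s"
  have sc: "s \<in> carrier G" using assms(2,3) by blast
  have x: "x = s \<otimes>\<^bsub>G\<^esub> (?y \<otimes>\<^bsub>G\<^esub> inv\<^bsub>G\<^esub> s)"
  proof -
    have "?y \<otimes>\<^bsub>G\<^esub> inv\<^bsub>G\<^esub> s = inv\<^bsub>G\<^esub> s \<otimes>\<^bsub>G\<^esub> x"
      using sc assms(5) by (simp add: m_assoc)
    then show ?thesis using sc assms(5) by (simp add: m_assoc[symmetric])
  qed
  have rs: "word_representable G S s" "word_representable G S (inv\<^bsub>G\<^esub> s)"
    using assms(2-4) is_monoid by (auto intro: word_representable_generator)
  have ry: "word_representable G S (?y \<otimes>\<^bsub>G\<^esub> inv\<^bsub>G\<^esub> s)"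
    by (rule word_representable_mult[OF is_monoid assms(2) rep rs(2)])
  have "word_length G S (s \<otimes>\<^bsub>G\<^esub> (?y \<otimes>\<^bsub>G\<^esub> inv\<^bsub>G\<^esub> s))
      \<le> word_length G S s + word_length G S (?y \<otimes>\<^bsub>G\<^esub> inv\<^bsub>G\<^esub> s)"
    by (rule word_length_mult_le[OF is_monoid assms(2) rs(1) ry])
  also have "\<dots> \<le> word_length G S s + (word_length G S ?y + word_length G S (inv\<^bsub>G\<^esub> s))"
    using word_length_mult_le[OF is_monoid assms(2) rep rs(2)] by linarith
  also have "\<dots> \<le> word_length G S ?y + 2"
    using word_length_generator_le[OF is_monoid assms(2) assms(3)]
      word_length_generator_le[OF is_monoid assms(2) assms(4)] by linarith
  finally show ?thesis unfolding x[symmetric] .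
qed

lemma word_prod_split_gen_concat:
  assumes "monoid G" "monoid H" "set wa \<subseteq> carrier G" "set wb \<subseteq> carrier H"
  shows "word_prod (G \<times>\<times> H) (map (\<lambda>s. (s, \<one>\<^bsub>H\<^esub>)) wa @ map (\<lambda>t. (\<one>\<^bsub>G\<^esub>, t)) wb)
    = (word_prod G wa, word_prod H wb)"
proof -
  have "set (map (\<lambda>_. \<one>\<^bsub>G\<^esub>) wb) \<subseteq> carrier G" "set (map (\<lambda>_. \<one>\<^bsub>H\<^esub>) wa) \<subseteq> carrier H"
    using monoid.one_closed[OF assms(1)] monoid.one_closed[OF assms(2)] by auto
  then show ?thesis
    unfolding word_prod_DirProd using assms
    by (simp del: foldr_append add: comp_def word_prod_append word_prod_ones word_prod_closed
        monoid.r_one monoid.l_one)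
qed

lemma word_length_split_gen_ge:
  assumes "monoid G" "monoid H" "S \<subseteq> carrier G" "S2 \<subseteq> carrier H"
    "word_representable (G \<times>\<times> H) (split_gen G H S S2) (a, b)"
  shows "word_length G S a + word_length H S2 b \<le> word_length (G \<times>\<times> H) (split_gen G H S S2) (a, b)"
proof -
  obtain w where w: "length w = word_length (G \<times>\<times> H) (split_gen G H S S2) (a, b)"
    "set w \<subseteq> split_gen G H S S2" "word_prod (G \<times>\<times> H) w = (a, b)"
    using assms(5) by (rule obtain_shortest_word)
  have prods: "word_prod G (map fst w) = a" "word_prod H (map snd w) = b"
    using w(3) unfolding word_prod_DirProd by simp_all
  let ?L = "S \<times> {\<one>\<^bsub>H\<^esub>}"
  define w1 where "w1 = map fst (filter (\<lambda>p. p \<in> ?L) w)"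
  define w2 where "w2 = map snd (filter (\<lambda>p. p \<notin> ?L) w)"
  have w_cases: "p \<in> ?L \<or> (fst p = \<one>\<^bsub>G\<^esub> \<and> snd p \<in> S2)" if "p \<in> set w" for p
    using that w(2) unfolding split_gen_def by auto
  have "fst p \<in> carrier G \<and> snd p \<in> carrier H" if "p \<in> set w" for p
    using w_cases[OF that] assms(3,4) monoid.one_closed[OF assms(1)] monoid.one_closed[OF assms(2)]
    by auto
  then have carrier: "fst ` set w \<subseteq> carrier G" "snd ` set w \<subseteq> carrier H" by auto
  have "word_prod G w1 = a"
    unfolding w1_def prods(1)[symmetric]
    by (rule word_prod_map_filter[OF assms(1) carrier(1)]) (use w_cases in blast)
  moreover have "set w1 \<subseteq> S" unfolding w1_def by auto
  ultimately have "word_length G S a \<le> length w1" by (intro word_length_le)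
  moreover have "word_prod H w2 = b"
    unfolding w2_def prods(2)[symmetric]
    by (rule word_prod_map_filter[OF assms(2) carrier(2)]) (use w_cases in auto)
  moreover have "set w2 \<subseteq> S2" unfolding w2_def using w_cases by auto
  ultimately have "word_length G S a + word_length H S2 b \<le> length w1 + length w2"
    using word_length_le by (metis add_mono)
  also have "\<dots> = length w"
    unfolding w1_def w2_def using sum_length_filter_compl[of "\<lambda>p. p \<in> ?L" w] by simp
  finally show ?thesis using w(1) by simp
qed

lemma word_length_split_gen:
  assumes "monoid G" "monoid H" "S \<subseteq> carrier G" "S2 \<subseteq> carrier H"
    "word_representable G S a" "word_representable H S2 b"
  shows "word_length (G \<times>\<times> H) (split_gen G H S S2) (a, b) = word_length G S a + word_length H S2 b"
proof -
  obtain wa where wa: "length wa = word_length G S a" "set wa \<subseteq> S" "word_prod G wa = a"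
    using assms(5) by (rule obtain_shortest_word)
  obtain wb where wb: "length wb = word_length H S2 b" "set wb \<subseteq> S2" "word_prod H wb = b"
    using assms(6) by (rule obtain_shortest_word)
  define ws where "ws = map (\<lambda>s. (s, \<one>\<^bsub>H\<^esub>)) wa @ map (\<lambda>t. (\<one>\<^bsub>G\<^esub>, t)) wb"
  have ws_gen: "set ws \<subseteq> split_gen G H S S2"
    using wa(2) wb(2) unfolding ws_def split_gen_def by auto
  have ws_prod: "word_prod (G \<times>\<times> H) ws = (a, b)"
    unfolding ws_def using wa wb assms(3,4) by (subst word_prod_split_gen_concat[OF assms(1,2)]) auto
  have "word_length (G \<times>\<times> H) (split_gen G H S S2) (a, b) \<le> length ws"
    by (rule word_length_le[OF ws_gen ws_prod])
  moreover have rep: "word_representable (G \<times>\<times> H) (split_gen G H S S2) (a, b)"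
    unfolding word_representable_def using ws_gen ws_prod by (intro exI[of _ ws]) simp
  moreover have "length ws = word_length G S a + word_length H S2 b"
    unfolding ws_def using wa(1) wb(1) by simp
  ultimately show ?thesis
    using word_length_split_gen_ge[OF assms(1-4) rep] by linarith
qed

lemma sum_split_gen:
  assumes "finite S" "finite S2" "\<one>\<^bsub>G\<^esub> \<notin> S"
  shows "sum f (split_gen G H S S2) = (\<Sum>s\<in>S. f (s, \<one>\<^bsub>H\<^esub>)) + (\<Sum>t\<in>S2. f (\<one>\<^bsub>G\<^esub>, t))"
proof -
  have "split_gen G H S S2 = (\<lambda>s. (s, \<one>\<^bsub>H\<^esub>)) ` S \<union> (\<lambda>t. (\<one>\<^bsub>G\<^esub>, t)) ` S2"
    unfolding split_gen_def by auto
  moreover have "(\<lambda>s. (s, \<one>\<^bsub>H\<^esub>)) ` S \<inter> (\<lambda>t. (\<one>\<^bsub>G\<^esub>, t)) ` S2 = {}"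
    using assms(3) by auto
  ultimately show ?thesis
    using assms(1,2) by (simp add: sum.union_disjoint sum.reindex inj_on_def)
qed

lemma card_split_gen:
  assumes "finite S" "finite S2" "\<one>\<^bsub>G\<^esub> \<notin> S"
  shows "card (split_gen G H S S2) = card S + card S2"
  using sum_split_gen[OF assms, of "\<lambda>_. 1 :: nat" H] by simp

lemma ncycle_ncycle_inv: "ncycle n \<circ> ncycle_inv n = id"
  by (rule ext) (auto simp: ncycle_def ncycle_inv_def)

lemma ncycle_inv_ncycle: "ncycle_inv n \<circ> ncycle n = id"
  by (rule ext) (auto simp: ncycle_def ncycle_inv_def)

lemma permutes_of_inverse:
  assumes "f \<circ> g = id" "g \<circ> f = id" "\<And>x. x \<notin> A \<Longrightarrow> f x = x"
  shows "f permutes A"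
  using o_bij[OF assms(2,1)] assms(3) unfolding permutes_def bij_iff by blast

lemma ncycle_permutes: "ncycle n permutes {1..n}"
  by (rule permutes_of_inverse[OF ncycle_ncycle_inv ncycle_inv_ncycle]) (auto simp: ncycle_def)

lemma ncycle_inv_permutes: "ncycle_inv n permutes {1..n}"
  by (rule permutes_of_inverse[OF ncycle_inv_ncycle ncycle_ncycle_inv]) (auto simp: ncycle_inv_def)

definition adjacent_transpositions :: "nat \<Rightarrow> (nat \<Rightarrow> nat) set" where
  "adjacent_transpositions n = (\<lambda>i. Transposition.transpose i (i + 1)) ` {1..<n}"

lemma S_neg_eq: "S_neg n = adjacent_transpositions n \<union> {ncycle n, ncycle_inv n}"
  unfolding S_neg_def adjacent_transpositions_def by auto

lemma finite_S_neg: "finite (S_neg n)"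
  unfolding S_neg_eq adjacent_transpositions_def by simp

lemma card_adjacent_transpositions: "card (adjacent_transpositions n) = n - 1"
proof -
  have "inj_on (\<lambda>i::nat. Transposition.transpose i (i + 1)) {1..<n}"
  proof (rule inj_onI)
    fix i j :: nat
    assume "Transposition.transpose i (i + 1) = Transposition.transpose j (j + 1)"
    then have "Transposition.transpose i (i + 1) i = Transposition.transpose j (j + 1) i" by simp
    then show "i = j" by (auto simp: transpose_def split: if_splits)
  qed
  then show ?thesis unfolding adjacent_transpositions_def by (simp add: card_image)
qed

lemma S_neg_subset_carrier: "S_neg n \<subseteq> carrier (sym_group n)"
  unfolding S_neg_eq adjacent_transpositions_def sym_group_carrier
  using ncycle_permutes ncycle_inv_permutes by (auto intro!: permutes_swap_id simp: sym_group_carrier)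

lemma S_neg_inv_closed: "t \<in> S_neg n \<Longrightarrow> inv\<^bsub>sym_group n\<^esub> t \<in> S_neg n"
  using S_neg_subset_carrier[of n]
    inv_unique_comp[OF ncycle_ncycle_inv ncycle_inv_ncycle]
    inv_unique_comp[OF ncycle_inv_ncycle ncycle_ncycle_inv]
  unfolding S_neg_eq adjacent_transpositions_def by (auto simp: subset_iff)

lemma ncycle_ne_id: "2 \<le> n \<Longrightarrow> ncycle n \<noteq> id"
proof
  assume "2 \<le> n" "ncycle n = id"
  then have "ncycle n 1 = 1" by simp
  then show False using \<open>2 \<le> n\<close> by (simp add: ncycle_def)
qed

text \<open>The conjugate maps \<open>i + 1\<close> to \<open>i\<close> and \<open>i\<close> to \<open>i + 2\<close> (to \<open>1\<close> if \<open>i + 1 = n\<close>);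
  \<open>n \<ge> 4\<close> excludes that it is \<open>\<sigma>\<inverse>\<close>, which for \<open>i = 1\<close> would need \<open>n = 3\<close>.\<close>
lemma transpose_conj_ncycle_notin_S_neg:
  assumes "1 \<le> i" "i < n" "4 \<le> n"
  shows "Transposition.transpose i (i + 1) \<circ> ncycle n \<circ> Transposition.transpose i (i + 1) \<notin> S_neg n"
    (is "?f \<notin> _")
proof
  have f_succ: "?f (i + 1) = i" using assms by (simp add: ncycle_def transpose_def)
  have f_i: "?f i = (if i + 1 < n then i + 2 else 1)" using assms by (auto simp: ncycle_def transpose_def)
  assume "?f \<in> S_neg n"
  then consider j where "?f = Transposition.transpose j (j + 1)" | "?f = ncycle n" | "?f = ncycle_inv n"
    unfolding S_neg_def by blast
  then show False
  proof cases
    case (1 j)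
    then have "Transposition.transpose j (j + 1) (i + 1) = i" using f_succ by simp
    then have "j = i" unfolding transpose_def by (cases "i + 1 = j"; cases "i = j"; simp)
    then have "?f i = i + 1" using 1 by simp
    then show False using f_i assms by (cases "i + 1 < n"; simp)
  next
    case 2
    then have "ncycle n (i + 1) = i" using f_succ by simp
    then show False using assms unfolding ncycle_def by (cases "i + 1 = n"; simp)
  next
    case 3
    then have "ncycle_inv n i = (if i + 1 < n then i + 2 else 1)" using f_i by simp
    then show False using assms unfolding ncycle_inv_def by (cases "i = 1"; cases "i + 1 < n"; simp)
  qed
qed

lemma adjacent_conj_ncycle_notin_S_neg:
  assumes "t \<in> adjacent_transpositions n" "4 \<le> n"
  shows "inv\<^bsub>sym_group n\<^esub> t \<otimes>\<^bsub>sym_group n\<^esub> ncycle n \<otimes>\<^bsub>sym_group n\<^esub> t \<notin> S_neg n"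
proof -
  obtain i where i: "1 \<le> i" "i < n" and t: "t = Transposition.transpose i (i + 1)"
    using assms(1) unfolding adjacent_transpositions_def by auto
  have "t permutes {1..n}" using i unfolding t by (auto intro: permutes_swap_id)
  then have "inv\<^bsub>sym_group n\<^esub> t = t"
    unfolding t by (simp add: sym_group_carrier inv_unique_comp)
  then show ?thesis
    using transpose_conj_ncycle_notin_S_neg[OF i assms(2)] by (simp add: sym_group_mult t)
qed

lemma (in group) conj_eq_one_iff:
  assumes "t \<in> carrier G" "x \<in> carrier G"
  shows "inv t \<otimes> x \<otimes> t = \<one> \<longleftrightarrow> x = \<one>"
proof -
  have "inv t \<otimes> x \<otimes> t = \<one> \<longleftrightarrow> x \<otimes> t = t \<otimes> \<one>"
    using inv_solve_left[of \<one> t "x \<otimes> t"] assms by (auto simp: m_assoc)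
  then show ?thesis using assms by simp
qed

locale split_gen_product = G: group G + H: group H
  for G :: "('a, 'c) monoid_scheme" and H :: "('b, 'd) monoid_scheme"
    and S :: "'a set" and S2 :: "'b set" +
  assumes gen_set: "fin_sym_gen_set G S" and S2_carrier: "S2 \<subseteq> carrier H"
begin

abbreviation P where "P \<equiv> G \<times>\<times> H"
abbreviation T where "T \<equiv> split_gen G H S S2"

lemma S_carrier: "S \<subseteq> carrier G" and finite_S: "finite S" and one_notin_S: "\<one>\<^bsub>G\<^esub> \<notin> S"
  and S_inv_closed: "s \<in> S \<Longrightarrow> inv\<^bsub>G\<^esub> s \<in> S"
  using gen_set unfolding fin_sym_gen_set_def by auto

lemma inv_pair [simp]:
  "a \<in> carrier G \<Longrightarrow> b \<in> carrier H \<Longrightarrow> inv\<^bsub>P\<^esub> (a, b) = (inv\<^bsub>G\<^esub> a, inv\<^bsub>H\<^esub> b)"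
  by (rule inv_DirProd[OF G.is_group H.is_group])

lemma word_length_pair:
  assumes "a \<in> carrier G" "word_representable H S2 b"
  shows "word_length P T (a, b) = word_length G S a + word_length H S2 b"
  using word_length_split_gen[OF G.is_monoid H.is_monoid S_carrier S2_carrier]
    word_representable_carrier[OF G.is_group gen_set] assms by blast

lemma word_length_pair_one:
  assumes "a \<in> carrier G"
  shows "word_length P T (a, \<one>\<^bsub>H\<^esub>) = word_length G S a"
proof -
  have "word_representable H S2 \<one>\<^bsub>H\<^esub>"
    unfolding word_representable_def by (intro exI[of _ "[]"]) simp
  then show ?thesis using word_length_pair[OF assms] by simp
qed

lemma word_dist_pairs_same_right:
  assumes "g \<in> carrier G" "h \<in> carrier G" "b \<in> carrier H"
  shows "word_dist P T (g, b) (h, b) = word_dist G S g h"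
  using assms word_length_pair_one[of "inv\<^bsub>G\<^esub> g \<otimes>\<^bsub>G\<^esub> h"] by (simp add: word_dist_def)

lemma word_dist_pair_mult_le:
  assumes "g \<in> carrier G" "h \<in> carrier G" "\<sigma> \<in> S2"
  shows "word_dist P T (g \<otimes>\<^bsub>G\<^esub> h, \<sigma>) ((g, \<sigma>) \<otimes>\<^bsub>P\<^esub> (h, \<sigma>)) \<le> 1"
proof -
  have \<sigma>: "\<sigma> \<in> carrier H" using assms(3) S2_carrier by blast
  then have "inv\<^bsub>P\<^esub> (g \<otimes>\<^bsub>G\<^esub> h, \<sigma>) \<otimes>\<^bsub>P\<^esub> ((g, \<sigma>) \<otimes>\<^bsub>P\<^esub> (h, \<sigma>)) = (\<one>\<^bsub>G\<^esub>, \<sigma>)"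
    using assms(1,2) by (simp add: H.m_assoc[symmetric])
  moreover have "word_length H S2 \<sigma> \<le> 1"
    using word_length_generator_le[OF H.is_monoid S2_carrier assms(3)] .
  ultimately show ?thesis
    using word_length_pair[OF G.one_closed] assms(3)
      word_representable_generator[OF H.is_monoid S2_carrier]
    by (simp add: word_dist_def)
qed

lemma word_length_conj_left_ge:
  assumes "g \<in> carrier G" "s \<in> S" "\<sigma> \<in> S2"
  shows "word_length G S g + word_length H S2 \<sigma>
    \<le> word_length P T (inv\<^bsub>P\<^esub> (s, \<one>\<^bsub>H\<^esub>) \<otimes>\<^bsub>P\<^esub> (g, \<sigma>) \<otimes>\<^bsub>P\<^esub> (s, \<one>\<^bsub>H\<^esub>)) + 2"
proof -
  have s: "s \<in> carrier G" and \<sigma>: "\<sigma> \<in> carrier H" using assms S_carrier S2_carrier by auto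
  then have "inv\<^bsub>P\<^esub> (s, \<one>\<^bsub>H\<^esub>) \<otimes>\<^bsub>P\<^esub> (g, \<sigma>) \<otimes>\<^bsub>P\<^esub> (s, \<one>\<^bsub>H\<^esub>)
      = (inv\<^bsub>G\<^esub> s \<otimes>\<^bsub>G\<^esub> g \<otimes>\<^bsub>G\<^esub> s, \<sigma>)"
    by simp
  moreover have "word_length G S g \<le> word_length G S (inv\<^bsub>G\<^esub> s \<otimes>\<^bsub>G\<^esub> g \<otimes>\<^bsub>G\<^esub> s) + 2"
    using assms(1,2) s S_inv_closed
    by (intro word_length_conj_le[OF G.is_group S_carrier]
        word_representable_carrier[OF G.is_group gen_set]) auto
  ultimately show ?thesis
    using assms s word_representable_generator[OF H.is_monoid S2_carrier assms(3)]
    by (simp add: word_length_pair)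
qed

lemma word_length_conj_right:
  assumes "g \<in> carrier G" "t \<in> S2" "inv\<^bsub>H\<^esub> t \<in> S2" "\<sigma> \<in> S2"
  shows "word_length P T (inv\<^bsub>P\<^esub> (\<one>\<^bsub>G\<^esub>, t) \<otimes>\<^bsub>P\<^esub> (g, \<sigma>) \<otimes>\<^bsub>P\<^esub> (\<one>\<^bsub>G\<^esub>, t))
    = word_length G S g + word_length H S2 (inv\<^bsub>H\<^esub> t \<otimes>\<^bsub>H\<^esub> \<sigma> \<otimes>\<^bsub>H\<^esub> t)"
proof -
  have t: "t \<in> carrier H" using assms S2_carrier by auto
  then have "inv\<^bsub>P\<^esub> (\<one>\<^bsub>G\<^esub>, t) \<otimes>\<^bsub>P\<^esub> (g, \<sigma>) \<otimes>\<^bsub>P\<^esub> (\<one>\<^bsub>G\<^esub>, t)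
      = (g, inv\<^bsub>H\<^esub> t \<otimes>\<^bsub>H\<^esub> \<sigma> \<otimes>\<^bsub>H\<^esub> t)"
    using assms(1) by simp
  moreover have "word_representable H S2 (inv\<^bsub>H\<^esub> t \<otimes>\<^bsub>H\<^esub> \<sigma> \<otimes>\<^bsub>H\<^esub> t)"
    using assms(2-4) S2_carrier
    by (intro word_representable_mult[OF H.is_monoid S2_carrier] word_representable_generator[OF H.is_monoid])
  ultimately show ?thesis using assms(1) by (simp add: word_length_pair)
qed

lemma curvature_pair_neg:
  assumes S2_fin: "finite S2" and S2_inv: "\<And>t. t \<in> S2 \<Longrightarrow> inv\<^bsub>H\<^esub> t \<in> S2"
    and \<sigma>: "\<sigma> \<in> S2" "\<sigma> \<noteq> \<one>\<^bsub>H\<^esub>"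
    and A: "A \<subseteq> S2" "2 * card S < card A" "\<And>t. t \<in> A \<Longrightarrow> inv\<^bsub>H\<^esub> t \<otimes>\<^bsub>H\<^esub> \<sigma> \<otimes>\<^bsub>H\<^esub> t \<notin> S2"
    and g: "g \<in> carrier G"
  shows "curvature P T (g, \<sigma>) < 0"
proof -
  define L where "L = word_length G S g"
  define c where "c a = real (word_length P T (inv\<^bsub>P\<^esub> a \<otimes>\<^bsub>P\<^esub> (g, \<sigma>) \<otimes>\<^bsub>P\<^esub> a))" for a
  have rep_\<sigma>: "word_representable H S2 \<sigma>"
    by (rule word_representable_generator[OF H.is_monoid S2_carrier \<sigma>(1)])
  have len_\<sigma>: "word_length H S2 \<sigma> = 1"
    using word_length_generator_le[OF H.is_monoid S2_carrier \<sigma>(1)]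
      word_length_eq_0_iff[OF rep_\<sigma>] \<sigma>(2) by linarith
  have len: "word_length P T (g, \<sigma>) = L + 1"
    unfolding L_def using word_length_pair[OF g rep_\<sigma>] len_\<sigma> by simp
  have left: "real L - 1 \<le> c (s, \<one>\<^bsub>H\<^esub>)" if "s \<in> S" for s
    using word_length_conj_left_ge[OF g that \<sigma>(1)] len_\<sigma> unfolding c_def L_def by linarith
  have right: "real L + 1 + (if t \<in> A then 1 else 0) \<le> c (\<one>\<^bsub>G\<^esub>, t)" if t: "t \<in> S2" for t
  proof -
    let ?\<tau> = "inv\<^bsub>H\<^esub> t \<otimes>\<^bsub>H\<^esub> \<sigma> \<otimes>\<^bsub>H\<^esub> t"
    have carr: "t \<in> carrier H" "\<sigma> \<in> carrier H" using t \<sigma>(1) S2_carrier by auto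
    have rep: "word_representable H S2 ?\<tau>"
      using t S2_inv[OF t] \<sigma>(1) S2_carrier
      by (intro word_representable_mult[OF H.is_monoid S2_carrier] word_representable_generator[OF H.is_monoid])
    have ne: "?\<tau> \<noteq> \<one>\<^bsub>H\<^esub>" using H.conj_eq_one_iff[OF carr] \<sigma>(2) by simp
    have "1 + (if t \<in> A then 1 else 0) \<le> word_length H S2 ?\<tau>"
      using word_length_eq_0_iff[OF rep] word_length_le_1_iff[OF H.is_monoid S2_carrier rep] ne A(3)
      by (cases "t \<in> A") auto
    then show ?thesis
      using word_length_conj_right[OF g t S2_inv[OF t] \<sigma>(1)] unfolding c_def L_def
      by (cases "t \<in> A") auto
  qed
  have "real (card S) * (real L - 1) \<le> (\<Sum>s\<in>S. c (s, \<one>\<^bsub>H\<^esub>))"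
    using sum_mono[OF left] by simp
  moreover have "real (card S2) * (real L + 1) + real (card A) \<le> (\<Sum>t\<in>S2. c (\<one>\<^bsub>G\<^esub>, t))"
  proof -
    have "(\<Sum>t\<in>S2. (if t \<in> A then 1 else 0 :: real)) = real (card A)"
      using S2_fin A(1) by (simp add: sum.If_cases Int_absorb1)
    moreover have "(\<Sum>t\<in>S2. real L + 1 + (if t \<in> A then 1 else 0)) \<le> (\<Sum>t\<in>S2. c (\<one>\<^bsub>G\<^esub>, t))"
      by (rule sum_mono) (rule right)
    ultimately show ?thesis by (simp add: sum.distrib)
  qed
  ultimately have "real (card S + card S2) * (real L + 1) < sum c T"
    using A(2) sum_split_gen[OF finite_S S2_fin one_notin_S, of c H]
    by (simp add: algebra_simps)
  moreover have "0 < card S2" using S2_fin \<sigma>(1) card_gt_0_iff by blast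
  ultimately have "real L + 1 < word_avg P T (g, \<sigma>)"
    unfolding word_avg_def c_def[symmetric] card_split_gen[OF finite_S S2_fin one_notin_S]
    by (simp add: pos_less_divide_eq mult.commute)
  then show ?thesis unfolding curvature_def len by (simp add: divide_neg_pos)
qed

theorem pair_embedding:
  assumes "finite S2" "\<And>t. t \<in> S2 \<Longrightarrow> inv\<^bsub>H\<^esub> t \<in> S2"
    and \<sigma>: "\<sigma> \<in> S2" "\<sigma> \<noteq> \<one>\<^bsub>H\<^esub>"
    and "A \<subseteq> S2" "2 * card S < card A" "\<And>t. t \<in> A \<Longrightarrow> inv\<^bsub>H\<^esub> t \<otimes>\<^bsub>H\<^esub> \<sigma> \<otimes>\<^bsub>H\<^esub> t \<notin> S2"
  shows "\<exists>i. i ` carrier G \<subseteq> carrier P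
    \<and> (\<forall>g\<in>carrier G. \<forall>h\<in>carrier G. word_dist P T (i g) (i h) = word_dist G S g h)
    \<and> (\<forall>g\<in>carrier G. i g \<noteq> \<one>\<^bsub>P\<^esub> \<and> curvature P T (i g) < 0)
    \<and> (\<forall>g\<in>carrier G. \<forall>h\<in>carrier G. word_dist P T (i (g \<otimes>\<^bsub>G\<^esub> h)) (i g \<otimes>\<^bsub>P\<^esub> i h) \<le> 1)"
proof -
  have "\<sigma> \<in> carrier H" using \<sigma>(1) S2_carrier by blast
  then show ?thesis
    using \<sigma> word_dist_pairs_same_right word_dist_pair_mult_le curvature_pair_neg[OF assms]
    by (intro exI[of _ "\<lambda>g. (g, \<sigma>)"]) auto
qed

end

theorem mainTheorem11:
  fixes G :: "('a, 'b) monoid_scheme" and S :: "'a set"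
  assumes "group G" and "fin_sym_gen_set G S"
  shows "\<exists>N::nat. \<forall>n\<ge>N. 3 \<le> n \<longrightarrow>
    (let P = G \<times>\<times> sym_group n; T = split_gen G (sym_group n) S (S_neg n) in
     \<exists>i. i ` carrier G \<subseteq> carrier P
       \<and> (\<forall>g\<in>carrier G. \<forall>h\<in>carrier G. word_dist P T (i g) (i h) = word_dist G S g h)
       \<and> (\<forall>g\<in>carrier G. i g \<noteq> \<one>\<^bsub>P\<^esub> \<and> curvature P T (i g) < 0)
       \<and> (\<forall>g\<in>carrier G. \<forall>h\<in>carrier G.
            word_dist P T (i (g \<otimes>\<^bsub>G\<^esub> h)) (i g \<otimes>\<^bsub>P\<^esub> i h) \<le> 1))"
  apply (intro exI[of _ "2 * card S + 4"] allI impI)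
  subgoal premises n for n
  proof -
    interpret split_gen_product G "sym_group n" S "S_neg n"
      by (intro split_gen_product.intro split_gen_product_axioms.intro assms
          sym_group_is_group S_neg_subset_carrier)
    have \<sigma>: "ncycle n \<in> S_neg n" "ncycle n \<noteq> \<one>\<^bsub>sym_group n\<^esub>"
      using n ncycle_ne_id[of n] by (auto simp: S_neg_def sym_group_one)
    show ?thesis
      unfolding Let_def
      by (rule pair_embedding[OF finite_S_neg S_neg_inv_closed \<sigma> _ _ adjacent_conj_ncycle_notin_S_neg])
        (use n in \<open>auto simp: S_neg_eq card_adjacent_transpositions\<close>)
  qed
  done

end
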